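(* Fix a private dataset $X=(x_1,\dots,x_n)\in(\mathbb{R}^d)^n$ and a finite set $B\subset\mathbb{R}^d$ of generated samples. Let $\mathcal{D}=\{D_1,\dots,D_N\}$ be a finite set of discriminators $D_j:\mathbb{R}^d\to[0,1]$. Suppose that: (i) for every $x\in X$ there exists $x_b\in B$ with $\|x-x_b\|_2\le\gamma$; (ii) $\mathcal{D}$ contains the constant discriminator $D^{1/2}$, which satisfies $D^{1/2}(x)=1/2$ for all $x$; (iii) every $D\in\mathcal{D}$ is $L$-Lipschitz with respect to $\|\cdot\|_2$. Then there exists a distribution $\phi\in\Delta(B)$ such that $(\phi, D^{1/2})$ is an $L\gamma$-approximate equilibrium of the post-GAN game. Consequently the game value $V$ satisfies $1\le V\le 1+L\gamma$.
   Context: Let $p_X$ be the empirical distribution of $X$. For $x\in\mathbb{R}^d$ and $D\in\mathcal{D}$, the payoff is $$U(x,D)=\mathbb{E}_{x'\sim p_X}[D(x')]+(1-D(x)).$$ For a distribution $\phi$ over $B$ and a distribution $\psi$ over $\mathcal{D}$, define $U(\phi,D)=\mathbb{E}_{x\sim\phi}[U(x,D)]$ and $U(\cdot,\psi)=\mathbb{E}_{D\sim\psi}[U(\cdot,D)]$. A mixture of discriminators, i.e. a distribution $\overline D$ over $\mathcal{D}$, is identified with the function $x\mapsto\mathbb{E}_{D\sim\overline D}[D(x)]$. $\Delta(B)$ denotes the set of probability distributions on $B$. A pair $(\overline D,\overline\phi)$, with $\overline D$ a mixture over $\mathcal{D}$ and $\overline\phi\in\Delta(B)$, is an $\alpha$-approximate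 equilibrium of the post-GAN game if $$\max_{D_j\in\mathcal{D}}U(\overline\phi,D_j)\le U(\overline\phi,\overline D)+\alpha \quad\text{and}\quad \min_{\phi\in\Delta(B)}U(\phi,\overline D)\ge U(\overline\phi,\overline D)-\alpha .$$ The game value is $$V=\min_{\phi\in\Delta(B)}\max_{j\in[N]}U(\phi,D_j)=\max_{\psi\in\Delta(\mathcal{D})}\min_{x\in B}U(x,\psi),$$ which is well defined by the minimax theorem. *)

theory Defs
  imports "HOL-Analysis.Analysis"
begin

text \<open>Dataset X = (x 0, ..., x (n-1)) in (R^d)^n; discriminators are functions R^d -> R.
  Empirical expectation of D under p_X.\<close>
definition emp_mean :: "(nat \<Rightarrow> 'a) \<Rightarrow> nat \<Rightarrow> ('a \<Rightarrow> real) \<Rightarrow> real" where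
  "emp_mean x n D = (\<Sum>i<n. D (x i)) / real n"

definition payoff :: "(nat \<Rightarrow> 'a) \<Rightarrow> nat \<Rightarrow> 'a \<Rightarrow> ('a \<Rightarrow> real) \<Rightarrow> real" where
  "payoff x n y D = emp_mean x n D + (1 - D y)"

definition dist_on :: "'a set \<Rightarrow> ('a \<Rightarrow> real) \<Rightarrow> bool" where
  "dist_on B \<phi> \<longleftrightarrow> (\<forall>b\<in>B. 0 \<le> \<phi> b) \<and> (\<forall>b. b \<notin> B \<longrightarrow> \<phi> b = 0) \<and> sum \<phi> B = 1"

definition payoff_dist :: "(nat \<Rightarrow> 'a) \<Rightarrow> nat \<Rightarrow> 'a set \<Rightarrow> ('a \<Rightarrow> real) \<Rightarrow> ('a \<Rightarrow> real) \<Rightarrow> real" where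
  "payoff_dist x n B \<phi> D = (\<Sum>b\<in>B. \<phi> b * payoff x n b D)"

text \<open>A mixture psi of discriminators (weights on the finite set Ds), identified with
  the function y |-> E_{D ~ psi}[D y].\<close>
definition mixture :: "('b \<Rightarrow> real) set \<Rightarrow> (('b \<Rightarrow> real) \<Rightarrow> real) \<Rightarrow> 'b \<Rightarrow> real" where
  "mixture Ds \<psi> y = (\<Sum>D\<in>Ds. \<psi> D * D y)"

definition approx_equilibrium ::
  "(nat \<Rightarrow> 'a) \<Rightarrow> nat \<Rightarrow> 'a set \<Rightarrow> ('a \<Rightarrow> real) set \<Rightarrow> (('a \<Rightarrow> real) \<Rightarrow> real)
    \<Rightarrow> ('a \<Rightarrow> real) \<Rightarrow> real \<Rightarrow> bool" where
  "approx_equilibrium x n B Ds \<psi> \<phi> \<alpha> \<longleftrightarrow>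
     dist_on Ds \<psi> \<and> dist_on B \<phi> \<and>
     (\<forall>Dj\<in>Ds. payoff_dist x n B \<phi> Dj \<le> payoff_dist x n B \<phi> (mixture Ds \<psi>) + \<alpha>) \<and>
     (\<forall>\<phi>'. dist_on B \<phi>' \<longrightarrow>
        payoff_dist x n B \<phi>' (mixture Ds \<psi>) \<ge> payoff_dist x n B \<phi> (mixture Ds \<psi>) - \<alpha>)"

definition game_value :: "(nat \<Rightarrow> 'a) \<Rightarrow> nat \<Rightarrow> 'a set \<Rightarrow> ('a \<Rightarrow> real) set \<Rightarrow> real" where
  "game_value x n B Ds = (INF \<phi>\<in>{\<phi>. dist_on B \<phi>}. Max ((\<lambda>D. payoff_dist x n B \<phi> D) ` Ds))"

end

theory Submission
  imports Defs
begin

text \<open>Move each data point x i to a point g i of B within distance \<gamma> and let \<phi> be the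
  empirical distribution of g 0, ..., g (n-1). Against the constant discriminator 1/2 every
  distribution on B has payoff exactly 1, so the generator side is an exact best response.
  For any discriminator D, the payoff of \<phi> is 1 + (1/n) \<Sum>i (D (x i) - D (g i)), which the
  Lipschitz bound caps at 1 + L\<gamma>. Both bounds on the game value follow: 1 from the
  constant discriminator, 1 + L\<gamma> from \<phi>.\<close>

definition empirical_dist :: "nat \<Rightarrow> (nat \<Rightarrow> 'a) \<Rightarrow> 'a \<Rightarrow> real" where
  "empirical_dist n g b = (\<Sum>i<n. if g i = b then 1 else 0) / real n"

lemma sum_empirical_dist:
  assumes "finite B" and "\<forall>i<n. g i \<in> B"
  shows "(\<Sum>b\<in>B. empirical_dist n g b * f b) = (\<Sum>i<n. f (g i)) / real n"
proof -
  have "(\<Sum>b\<in>B. empirical_dist n g b * f b)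
      = (\<Sum>b\<in>B. \<Sum>i<n. if g i = b then f b else 0) / real n"
    unfolding empirical_dist_def sum_divide_distrib sum_distrib_right
    by (intro sum.cong refl) auto
  also have "(\<Sum>b\<in>B. \<Sum>i<n. if g i = b then f b else 0)
      = (\<Sum>i<n. \<Sum>b\<in>B. if g i = b then f b else 0)"
    by (rule sum.swap)
  also have "\<dots> = (\<Sum>i<n. f (g i))"
    using assms by (intro sum.cong) (auto simp: sum.delta')
  finally show ?thesis .
qed

lemma dist_on_empirical_dist:
  assumes "finite B" and "\<forall>i<n. g i \<in> B" and "0 < n"
  shows "dist_on B (empirical_dist n g)"
  unfolding dist_on_def
proof (intro conjI ballI allI impI)
  show "0 \<le> empirical_dist n g b" for b
    unfolding empirical_dist_def by (intro divide_nonneg_nonneg sum_nonneg) auto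
  show "empirical_dist n g b = 0" if "b \<notin> B" for b
    unfolding empirical_dist_def using assms(2) that by (auto intro!: sum.neutral)
  show "sum (empirical_dist n g) B = 1"
    using sum_empirical_dist[OF assms(1,2), of "\<lambda>_. 1"] assms(3) by simp
qed

lemma dist_on_point_mass:
  assumes "finite A" and "a \<in> A"
  shows "dist_on A (\<lambda>b. if b = a then 1 else 0)"
  unfolding dist_on_def using assms by (simp add: sum.delta')

lemma mixture_point_mass:
  assumes "finite Ds" and "D0 \<in> Ds"
  shows "mixture Ds (\<lambda>D. if D = D0 then 1 else 0) = D0"
proof
  fix y
  have "mixture Ds (\<lambda>D. if D = D0 then 1 else 0) y = (\<Sum>D\<in>Ds. if D = D0 then D y else 0)"
    unfolding mixture_def by (intro sum.cong) auto
  also have "\<dots> = D0 y"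
    using assms by (simp add: sum.delta')
  finally show "mixture Ds (\<lambda>D. if D = D0 then 1 else 0) y = D0 y" .
qed

lemma payoff_dist_eq:
  assumes "dist_on B \<phi>"
  shows "payoff_dist x n B \<phi> D = 1 + emp_mean x n D - (\<Sum>b\<in>B. \<phi> b * D b)"
proof -
  have "payoff_dist x n B \<phi> D
      = (\<Sum>b\<in>B. \<phi> b * (emp_mean x n D + 1)) - (\<Sum>b\<in>B. \<phi> b * D b)"
    unfolding payoff_dist_def payoff_def by (simp add: algebra_simps sum_subtractf)
  also have "(\<Sum>b\<in>B. \<phi> b * (emp_mean x n D + 1)) = emp_mean x n D + 1"
    using assms unfolding dist_on_def by (simp flip: sum_distrib_right)
  finally show ?thesis by simp
qed

lemma payoff_dist_const:
  assumes "dist_on B \<phi>" and "0 < n"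
  shows "payoff_dist x n B \<phi> (\<lambda>_. c) = 1"
  using assms by (simp add: payoff_dist_eq emp_mean_def dist_on_def
      flip: sum_distrib_right)

lemma payoff_dist_empirical_dist_le:
  assumes "finite B" and "0 < n"
    and near: "\<forall>i<n. g i \<in> B \<and> norm (x i - g i) \<le> \<gamma>"
    and lip: "L-lipschitz_on UNIV D"
  shows "payoff_dist x n B (empirical_dist n g) D \<le> 1 + L * \<gamma>"
proof -
  have g_in: "\<forall>i<n. g i \<in> B" using near by blast
  have eq: "payoff_dist x n B (empirical_dist n g) D = 1 + (\<Sum>i<n. D (x i) - D (g i)) / real n"
    using payoff_dist_eq[OF dist_on_empirical_dist[OF assms(1) g_in assms(2)]]
    by (simp add: sum_empirical_dist[OF assms(1) g_in] emp_mean_def sum_subtractf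
        diff_divide_distrib)
  have "(\<Sum>i<n. D (x i) - D (g i)) \<le> (\<Sum>i<n. L * \<gamma>)"
  proof (rule sum_mono)
    fix i assume "i \<in> {..<n}"
    then have "dist (x i) (g i) \<le> \<gamma>" using near by (simp add: dist_norm)
    then have "dist (D (x i)) (D (g i)) \<le> L * \<gamma>"
      using lipschitz_onD[OF lip] lipschitz_on_nonneg[OF lip]
      by (meson UNIV_I mult_left_mono order_trans)
    then show "D (x i) - D (g i) \<le> L * \<gamma>" by (simp add: dist_real_def)
  qed
  then have "(\<Sum>i<n. D (x i) - D (g i)) / real n \<le> L * \<gamma>"
    using assms(2) by (simp add: divide_le_eq mult.commute)
  with eq show ?thesis by simp
qed

lemma game_value_bounds:
  assumes "dist_on B \<phi>" and "finite Ds" and "Ds \<noteq> {}"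
    and lower: "\<forall>\<phi>'. dist_on B \<phi>' \<longrightarrow> (\<exists>D\<in>Ds. c \<le> payoff_dist x n B \<phi>' D)"
    and upper: "\<forall>D\<in>Ds. payoff_dist x n B \<phi> D \<le> u"
  shows "c \<le> game_value x n B Ds \<and> game_value x n B Ds \<le> u"
proof -
  have max_ge: "c \<le> Max ((\<lambda>D. payoff_dist x n B \<phi>' D) ` Ds)" if \<phi>': "dist_on B \<phi>'" for \<phi>'
  proof -
    obtain D where "D \<in> Ds" and "c \<le> payoff_dist x n B \<phi>' D"
      using lower \<phi>' by blast
    moreover have "payoff_dist x n B \<phi>' D \<le> Max ((\<lambda>D. payoff_dist x n B \<phi>' D) ` Ds)"
      using \<open>D \<in> Ds\<close> assms(2) by (intro Max_ge) auto
    ultimately show ?thesis by linarith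
  qed
  have "c \<le> game_value x n B Ds"
    unfolding game_value_def using assms(1) max_ge by (intro cINF_greatest) auto
  moreover have "game_value x n B Ds \<le> Max ((\<lambda>D. payoff_dist x n B \<phi> D) ` Ds)"
    unfolding game_value_def
    by (rule cINF_lower) (use max_ge assms(1) in \<open>auto simp: bdd_below_def\<close>)
  moreover have "\<dots> \<le> u"
    using assms(2,3) upper by (subst Max_le_iff) auto
  ultimately show ?thesis by linarith
qed

theorem theorem1:
  fixes x :: "nat \<Rightarrow> real ^ 'd" and n :: nat
    and B :: "(real ^ 'd) set" and Ds :: "(real ^ 'd \<Rightarrow> real) set"
    and Dhalf :: "real ^ 'd \<Rightarrow> real" and L \<gamma> :: real
  assumes n_pos: "0 < n"
    and B_fin: "finite B"
    and Ds_fin: "finite Ds"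
    and Ds_range: "\<forall>D\<in>Ds. \<forall>y. 0 \<le> D y \<and> D y \<le> 1"
    and cover: "\<forall>i<n. \<exists>b\<in>B. norm (x i - b) \<le> \<gamma>"
    and half_in: "Dhalf \<in> Ds"
    and half: "\<forall>y. Dhalf y = 1/2"
    and lip: "\<forall>D\<in>Ds. L-lipschitz_on UNIV D"
  shows "(\<exists>\<phi>. dist_on B \<phi> \<and>
           approx_equilibrium x n B Ds (\<lambda>D. if D = Dhalf then 1 else 0) \<phi> (L * \<gamma>))
         \<and> 1 \<le> game_value x n B Ds \<and> game_value x n B Ds \<le> 1 + L * \<gamma>"
proof -
  obtain g where near: "\<forall>i<n. g i \<in> B \<and> norm (x i - g i) \<le> \<gamma>"
    using cover by metis
  define \<phi> where "\<phi> = empirical_dist n g"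
  have \<phi>: "dist_on B \<phi>"
    unfolding \<phi>_def using dist_on_empirical_dist B_fin near n_pos by blast
  have Dhalf_eq: "Dhalf = (\<lambda>_. 1/2)" using half by auto
  have half_payoff: "payoff_dist x n B \<phi>' Dhalf = 1" if "dist_on B \<phi>'" for \<phi>'
    using payoff_dist_const[OF that n_pos] Dhalf_eq by simp
  have upper: "\<forall>D\<in>Ds. payoff_dist x n B \<phi> D \<le> 1 + L * \<gamma>"
    unfolding \<phi>_def using payoff_dist_empirical_dist_le[OF B_fin n_pos near] lip by blast
  have "0 \<le> L" using lipschitz_on_nonneg lip half_in by blast
  moreover have "0 \<le> \<gamma>" using near n_pos norm_ge_zero order_trans by blast
  ultimately have "0 \<le> L * \<gamma>" by simp
  then have "approx_equilibrium x n B Ds (\<lambda>D. if D = Dhalf then 1 else 0) \<phi> (L * \<gamma>)"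
    unfolding approx_equilibrium_def mixture_point_mass[OF Ds_fin half_in]
    using dist_on_point_mass[OF Ds_fin half_in] \<phi> upper half_payoff by auto
  moreover have "1 \<le> game_value x n B Ds \<and> game_value x n B Ds \<le> 1 + L * \<gamma>"
    by (rule game_value_bounds[OF \<phi> Ds_fin _ _ upper]) (use half_in half_payoff in force)+
  ultimately show ?thesis using \<phi> by blast
qed

end
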